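(* Fix an edge $(i,t)\in E$, a partial sample path $\omega_{t-1}$, and seed values $Y_{-i}=(y_j)_{j\ne i}$. Let $I^t_{-i}$ be the set of neighbours $j\neq i$ of $t$ that are still available when $t$ arrives in the execution of Algorithm 1 on the instance with $i$ removed (same $Y_{-i}$, outcomes of earlier edges given by $\omega_{t-1}$). Define $y^c_i\in[0,1]$ by $p_{it}r_i(1-g(y^c_i))=\max_{j\in I^t_{-i}}p_{jt}r_j(1-g(y_j))$, with $y^c_i=1$ if $I^t_{-i}=\emptyset$ and $y^c_i=0$ if no such value exists. Then for every $y_i\in[0,1]$, $E[\lambda^Y_t\mid\omega_{t-1}]\ge p_{it}r_i(1-g(y^c_i))$; consequently $E_{y_i\sim U[0,1]}\big[E[\lambda^Y_t\mid\omega_{t-1}]\big]\ge p_{it}r_i(1-g(y^c_i))$.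
   Context: Online stochastic rewards problem: bipartite graph $G=(I,T,E)$, resources $i\in I$ with rewards $r_i>0$ and unit capacity, arrivals $t=1,2,\dots$ with edge probabilities $p_{it}\in[0,1]$; each arrival is offered at most one available neighbour, the offer succeeds independently with probability $p_{it}$, earning $r_i$ and making $i$ unavailable; otherwise $i$ stays available. A sample path $\omega$ fixes for every edge an outcome $\mathbb{1}^\omega(i,t)\in\{0,1\}$ (independent Bernoulli($p_{it}$)); an offer of $i$ to $t$ on $\omega$ succeeds iff $\mathbb{1}^\omega(i,t)=1$. $\omega_{t-1}$ is the restriction of $\omega$ to edges incident to arrivals $t'\le t-1$; $E[\cdot\mid\omega_{t-1}]$ averages over the outcomes of all remaining edges. Algorithm 1: $g(y)=e^{y-1}$; seed $Y=(y_i)_{i\in I}$ with $y_i$ i.i.d. $U[0,1]$; arrival $t$ is offered the available neighbour $i$ maximizing $p_{it}r_i(1-g(y_i))$. Dual variables: all initialized to $0$; whenever Algorithm 1 on $(\omega,Y)$ offers $i$ to $t$, set $\lambda^{Y}_t=r_i(1-g(y_i))\mathbb{1}^\omega(i,t)$ and increase $\theta^{Y}_i$ by $r_ig(y_i)\mathbb{1}^\omega(i,t)$ (dependence on $\omega$ suppressed). *)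

theory Defs
  imports "HOL-Probability.Probability"
begin

text \<open>Instance: resources I (finite set of a linearly ordered type, the order being
  used only for deterministic tie-breaking), edges E :: ('i * nat) set (resource, arrival),
  edge probabilities p, rewards r.  Sample path omega :: 'i * nat => bool gives the
  outcome of every edge.\<close>

definition g :: "real \<Rightarrow> real" where
  "g y = exp (y - 1)"

definition score :: "('i \<Rightarrow> nat \<Rightarrow> real) \<Rightarrow> ('i \<Rightarrow> real) \<Rightarrow> ('i \<Rightarrow> real) \<Rightarrow> 'i \<Rightarrow> nat \<Rightarrow> real" where
  "score p r Y j t = p j t * r j * (1 - g (Y j))"

definition offer :: "('i::linorder \<times> nat) set \<Rightarrow> ('i \<Rightarrow> nat \<Rightarrow> real) \<Rightarrow> ('i \<Rightarrow> real) \<Rightarrow> ('i \<Rightarrow> real)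
      \<Rightarrow> 'i set \<Rightarrow> nat \<Rightarrow> 'i option" where
  "offer E p r Y A t =
     (let N = {j \<in> A. (j, t) \<in> E} in
      if N = {} then None
      else Some (Min {j \<in> N. \<forall>k \<in> N. score p r Y k t \<le> score p r Y j t}))"

text \<open>Arrivals are t = 1, 2, ...; avail at index Suc t is obtained by processing arrival t.\<close>
primrec avail :: "'i::linorder set \<Rightarrow> ('i \<times> nat) set \<Rightarrow> ('i \<Rightarrow> nat \<Rightarrow> real) \<Rightarrow> ('i \<Rightarrow> real)
      \<Rightarrow> ('i \<Rightarrow> real) \<Rightarrow> ('i \<times> nat \<Rightarrow> bool) \<Rightarrow> nat \<Rightarrow> 'i set" where
  "avail R E p r Y \<omega> 0 = R"
| "avail R E p r Y \<omega> (Suc t) =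
     (let A = avail R E p r Y \<omega> t in
      case offer E p r Y A t of
        None \<Rightarrow> A
      | Some j \<Rightarrow> (if \<omega> (j, t) then A - {j} else A))"

definition lam :: "'i::linorder set \<Rightarrow> ('i \<times> nat) set \<Rightarrow> ('i \<Rightarrow> nat \<Rightarrow> real) \<Rightarrow> ('i \<Rightarrow> real)
      \<Rightarrow> ('i \<Rightarrow> real) \<Rightarrow> ('i \<times> nat \<Rightarrow> bool) \<Rightarrow> nat \<Rightarrow> real" where
  "lam R E p r Y \<omega> t =
     (case offer E p r Y (avail R E p r Y \<omega> t) t of
        None \<Rightarrow> 0
      | Some j \<Rightarrow> r j * (1 - g (Y j)) * (if \<omega> (j, t) then 1 else 0))"

text \<open>E[lambda_t^Y | omega_{t-1}]: outcomes of edges with arrival < t are taken from \<omega>,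
  outcomes of all remaining edges are independent Bernoulli(p).\<close>
definition cond_exp_lam :: "'i::linorder set \<Rightarrow> ('i \<times> nat) set \<Rightarrow> ('i \<Rightarrow> nat \<Rightarrow> real) \<Rightarrow> ('i \<Rightarrow> real)
      \<Rightarrow> ('i \<Rightarrow> real) \<Rightarrow> ('i \<times> nat \<Rightarrow> bool) \<Rightarrow> nat \<Rightarrow> real" where
  "cond_exp_lam R E p r Y \<omega> t =
     measure_pmf.expectation
       (Pi_pmf {e \<in> E. snd e \<ge> t} False (\<lambda>(j, s). bernoulli_pmf (p j s)))
       (\<lambda>\<rho>. lam R E p r Y (\<lambda>(j, s). if s < t then \<omega> (j, s) else \<rho> (j, s)) t)"

definition ycrit :: "'i::linorder set \<Rightarrow> ('i \<times> nat) set \<Rightarrow> ('i \<Rightarrow> nat \<Rightarrow> real) \<Rightarrow> ('i \<Rightarrow> real)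
      \<Rightarrow> ('i \<Rightarrow> real) \<Rightarrow> ('i \<times> nat \<Rightarrow> bool) \<Rightarrow> 'i \<Rightarrow> nat \<Rightarrow> real" where
  "ycrit I E p r Y \<omega> i t =
     (let It = {j \<in> avail (I - {i}) E p r Y \<omega> t. (j, t) \<in> E};
          M = Max ((\<lambda>j. score p r Y j t) ` It) in
      if It = {} then 1
      else if (\<exists>y \<in> {0..1}. p i t * r i * (1 - g y) = M)
           then (SOME y. y \<in> {0..1} \<and> p i t * r i * (1 - g y) = M)
      else 0)"

end

theory Submission
  imports Defs
begin

text \<open>Deleting resource \<open>i\<close> can only shrink the sets of available resources: by induction
  over the arrivals, the run on \<open>I\<close> either offers the same resource as the run on \<open>I - {i}\<close>
  or one that the latter no longer holds. Hence every neighbour in \<open>I\<^sup>t\<^sub>-\<^sub>i\<close> is still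
  available to \<open>t\<close> in the full run, and the resource offered there has score at least
  \<open>max\<^sub>j p\<^sub>j\<^sub>t r\<^sub>j (1 - g y\<^sub>j)\<close>. Since the offer succeeds with probability \<open>p\<close>,
  \<open>E[\<lambda>\<^sub>t | \<omega>\<^sub>t\<^sub>-\<^sub>1]\<close> is exactly that score. The critical value \<open>y\<^sup>c\<^sub>i\<close> is chosen so
  that \<open>p\<^sub>i\<^sub>t r\<^sub>i (1 - g y\<^sup>c\<^sub>i)\<close> does not exceed this maximum (by the intermediate value
  theorem when no exact solution exists), and averaging over \<open>y\<^sub>i\<close> keeps the bound.\<close>

lemma avail_cong_past:
  assumes "\<And>j s'. s' < s \<Longrightarrow> \<omega> (j, s') = \<omega>' (j, s')"
  shows "avail R E p r Y \<omega> s = avail R E p r Y \<omega>' s"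
  using assms by (induction s) (auto simp: Let_def split: option.splits)

lemma avail_subset: "avail R E p r Y \<omega> s \<subseteq> R"
  by (induction s) (auto simp: Let_def split: option.splits)

lemma finite_avail: "finite R \<Longrightarrow> finite (avail R E p r Y \<omega> s)"
  using avail_subset finite_subset by metis

lemma Suc_avail_subset: "avail R E p r Y \<omega> (Suc s) \<subseteq> avail R E p r Y \<omega> s"
  by (auto simp: Let_def split: option.splits)

lemma argmax_set_nonempty:
  fixes f :: "'a \<Rightarrow> 'b::linorder"
  assumes "finite N" "N \<noteq> {}"
  shows "{j \<in> N. \<forall>k \<in> N. f k \<le> f j} \<noteq> {}"
proof -
  have "Max (f ` N) \<in> f ` N" using assms by simp
  then obtain j where "j \<in> N" "f j = Max (f ` N)" by auto
  with assms show ?thesis by fastforce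
qed

lemma offer_eq_None_iff: "offer E p r Y A t = None \<longleftrightarrow> {j \<in> A. (j, t) \<in> E} = {}"
  by (simp add: offer_def Let_def)

lemma offer_eq_Some_argmax:
  assumes "offer E p r Y A t = Some a" "finite A"
  defines "N \<equiv> {j \<in> A. (j, t) \<in> E}"
  shows "a = Min {j \<in> N. \<forall>k \<in> N. score p r Y k t \<le> score p r Y j t}"
    and "a \<in> {j \<in> N. \<forall>k \<in> N. score p r Y k t \<le> score p r Y j t}"
proof -
  have "N \<noteq> {}" using assms(1) offer_eq_None_iff[of E p r Y A t] by (auto simp: N_def)
  then have "offer E p r Y A t = Some (Min {j \<in> N. \<forall>k \<in> N. score p r Y k t \<le> score p r Y j t})"
    unfolding offer_def Let_def N_def[symmetric] by simp
  then show a: "a = Min {j \<in> N. \<forall>k \<in> N. score p r Y k t \<le> score p r Y j t}"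
    using assms(1) by simp
  show "a \<in> {j \<in> N. \<forall>k \<in> N. score p r Y k t \<le> score p r Y j t}"
    unfolding a using \<open>N \<noteq> {}\<close> assms(2) argmax_set_nonempty[of N]
    by (intro Min_in) (auto simp: N_def)
qed

lemma offer_SomeD:
  assumes "offer E p r Y A t = Some a" "finite A"
  shows "a \<in> A" "(a, t) \<in> E" "\<And>k. k \<in> A \<Longrightarrow> (k, t) \<in> E \<Longrightarrow> score p r Y k t \<le> score p r Y a t"
  using offer_eq_Some_argmax(2)[OF assms] by auto

text \<open>The tie-breaking towards the least resource survives the restriction because every
  maximizer over \<open>B\<close> is also a maximizer over \<open>A\<close>.\<close>
lemma offer_restrict:
  assumes oA: "offer E p r Y' A s = Some a" and a: "a \<in> B"
    and "B \<subseteq> A" "finite A"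
    and same_score: "\<And>j. j \<in> B \<Longrightarrow> score p r Y' j s = score p r Y j s"
  shows "offer E p r Y B s = Some a"
proof -
  let ?NA = "{j \<in> A. (j, s) \<in> E}" and ?NB = "{j \<in> B. (j, s) \<in> E}"
  let ?MA = "{j \<in> ?NA. \<forall>k \<in> ?NA. score p r Y' k s \<le> score p r Y' j s}"
  let ?MB = "{j \<in> ?NB. \<forall>k \<in> ?NB. score p r Y k s \<le> score p r Y j s}"
  have a_Min: "a = Min ?MA" and a_MA: "a \<in> ?MA"
    using offer_eq_Some_argmax[OF oA \<open>finite A\<close>] by auto
  have a_MB: "a \<in> ?MB"
  proof -
    have "score p r Y k s \<le> score p r Y a s" if "k \<in> ?NB" for k
      using a_MA that \<open>B \<subseteq> A\<close> same_score[OF a] same_score[of k] by auto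
    then show ?thesis using a_MA a by auto
  qed
  have "?MB \<subseteq> ?MA"
  proof
    fix j assume j: "j \<in> ?MB"
    then have "score p r Y' a s \<le> score p r Y' j s"
      using a_MB same_score[OF a] same_score[of j] by auto
    then show "j \<in> ?MA" using j a_MA \<open>B \<subseteq> A\<close> by force
  qed
  then have "Min ?MB = a"
    using a_MB a_Min \<open>finite A\<close> \<open>B \<subseteq> A\<close>
    by (intro Min_eqI) (auto intro: finite_subset)
  moreover have "?NB \<noteq> {}" using a_MB by auto
  ultimately show ?thesis by (simp add: offer_def Let_def)
qed

lemma avail_remove_subset:
  assumes "finite I" and same_seed: "\<And>j. j \<noteq> i \<Longrightarrow> Y' j = Y j"
  shows "avail (I - {i}) E p r Y \<omega> s \<subseteq> avail I E p r Y' \<omega> s - {i}"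
proof (induction s)
  case 0
  then show ?case by simp
next
  case (Suc s)
  let ?B = "avail (I - {i}) E p r Y \<omega> s" and ?A = "avail I E p r Y' \<omega> s"
  have "?B \<subseteq> ?A" using Suc.IH by blast
  have "i \<notin> ?B" using avail_subset[of "I - {i}" E p r Y \<omega> s] by blast
  show ?case
  proof (cases "offer E p r Y' ?A s")
    case None
    with \<open>?B \<subseteq> ?A\<close> have "offer E p r Y ?B s = None"
      by (auto simp: offer_eq_None_iff)
    with None Suc.IH show ?thesis by (simp add: Let_def)
  next
    case (Some a)
    show ?thesis
    proof (cases "a \<in> ?B")
      case False
      have "?A - {a} \<subseteq> avail I E p r Y' \<omega> (Suc s)"
        using Some by (auto simp: Let_def)
      moreover have "avail (I - {i}) E p r Y \<omega> (Suc s) \<subseteq> ?B"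
        by (rule Suc_avail_subset)
      ultimately show ?thesis using Suc.IH False by blast
    next
      case True
      have "score p r Y' j s = score p r Y j s" if "j \<in> ?B" for j
        using same_seed \<open>i \<notin> ?B\<close> that by (metis score_def)
      then have "offer E p r Y ?B s = Some a"
        using offer_restrict[OF Some True \<open>?B \<subseteq> ?A\<close> finite_avail[OF \<open>finite I\<close>]] by blast
      with Some Suc.IH show ?thesis by (auto simp: Let_def)
    qed
  qed
qed

text \<open>The future outcomes enter \<open>\<lambda>\<^sub>t\<close> only through the Bernoulli outcome of the offered edge.\<close>
lemma cond_exp_lam_eq_offered_score:
  assumes "finite E" "finite R" and p: "\<And>j s. (j, s) \<in> E \<Longrightarrow> 0 \<le> p j s \<and> p j s \<le> 1"
  shows "cond_exp_lam R E p r Y \<omega> t =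
     (case offer E p r Y (avail R E p r Y \<omega> t) t of None \<Rightarrow> 0 | Some a \<Rightarrow> score p r Y a t)"
proof -
  let ?P = "Pi_pmf {e \<in> E. snd e \<ge> t} False (\<lambda>(j, s). bernoulli_pmf (p j s))"
  let ?A = "avail R E p r Y \<omega> t"
  have past: "avail R E p r Y (\<lambda>(j, s). if s < t then \<omega> (j, s) else \<rho> (j, s)) t = ?A" for \<rho>
    by (rule avail_cong_past) auto
  show ?thesis
  proof (cases "offer E p r Y ?A t")
    case None
    then show ?thesis unfolding cond_exp_lam_def lam_def past by simp
  next
    case (Some a)
    have aE: "(a, t) \<in> E" using offer_SomeD(2)[OF Some finite_avail[OF \<open>finite R\<close>]] .
    have "cond_exp_lam R E p r Y \<omega> t =
        measure_pmf.expectation ?P (\<lambda>\<rho>. r a * (1 - g (Y a)) * (if \<rho> (a, t) then 1 else 0))"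
      unfolding cond_exp_lam_def lam_def past Some by simp
    also have "\<dots> = measure_pmf.expectation (map_pmf (\<lambda>\<rho>. \<rho> (a, t)) ?P)
                      (\<lambda>b. r a * (1 - g (Y a)) * (if b then 1 else 0))"
      by (rule integral_map_pmf[symmetric])
    also have "map_pmf (\<lambda>\<rho>. \<rho> (a, t)) ?P = bernoulli_pmf (p a t)"
      using \<open>finite E\<close> aE by (subst Pi_pmf_component) auto
    also have "measure_pmf.expectation (bernoulli_pmf (p a t))
                 (\<lambda>b. r a * (1 - g (Y a)) * (if b then 1 else 0)) = score p r Y a t"
      using p[OF aE] by (simp add: score_def)
    finally show ?thesis using Some by simp
  qed
qed

lemma score_nonneg: "0 \<le> p j t \<Longrightarrow> 0 \<le> r j \<Longrightarrow> Y j \<le> 1 \<Longrightarrow> 0 \<le> score p r Y j t"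
  by (simp add: score_def g_def)

lemma score_le_reward:
  assumes "0 \<le> p j t" "p j t \<le> 1" "0 \<le> r j" "Y j \<le> 1"
  shows "score p r Y j t \<le> r j"
proof -
  have "p j t * (1 - g (Y j)) \<le> 1"
    using assms by (intro mult_le_one) (auto simp: g_def)
  then have "r j * (p j t * (1 - g (Y j))) \<le> r j * 1"
    using assms(3) by (rule mult_left_mono)
  then show ?thesis by (simp add: score_def mult_ac)
qed

lemma critical_value_le:
  fixes h :: "real \<Rightarrow> real"
  assumes "continuous_on {0..1} h" "h 1 \<le> M"
  shows "h (if \<exists>y \<in> {0..1}. h y = M then SOME y. y \<in> {0..1} \<and> h y = M else 0) \<le> M"
proof (cases "\<exists>y \<in> {0..1}. h y = M")
  case True
  then have "h (SOME y. y \<in> {0..1} \<and> h y = M) = M"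
    by (metis (mono_tags, lifting) someI_ex)
  with True show ?thesis by simp
next
  case False
  have "h 0 < M"
  proof (rule ccontr)
    assume "\<not> h 0 < M"
    then obtain y where "0 \<le> y" "y \<le> 1" "h y = M"
      using IVT2'[of h 1 M 0] assms by auto
    with False show False by auto
  qed
  with False show ?thesis by simp
qed

lemma score_le_cond_exp_lam_removed:
  assumes "finite I" "finite E" "\<And>j s. (j, s) \<in> E \<Longrightarrow> 0 \<le> p j s \<and> p j s \<le> 1"
    and same_seed: "\<And>j. j \<noteq> i \<Longrightarrow> Y' j = Y j"
    and k: "k \<in> avail (I - {i}) E p r Y \<omega> t" "(k, t) \<in> E"
  shows "score p r Y k t \<le> cond_exp_lam I E p r Y' \<omega> t"
proof -
  let ?A = "avail I E p r Y' \<omega> t"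
  have "k \<in> ?A" "k \<noteq> i"
    using avail_remove_subset[of I i Y' Y, OF \<open>finite I\<close> same_seed] k(1) by blast+
  with k(2) obtain a where a: "offer E p r Y' ?A t = Some a"
    using offer_eq_None_iff[of E p r Y' ?A t] by (cases "offer E p r Y' ?A t") auto
  have "score p r Y k t = score p r Y' k t"
    using same_seed[OF \<open>k \<noteq> i\<close>] by (simp add: score_def)
  also have "\<dots> \<le> score p r Y' a t"
    using offer_SomeD(3)[OF a finite_avail[OF \<open>finite I\<close>] \<open>k \<in> ?A\<close> k(2)] .
  also have "\<dots> = cond_exp_lam I E p r Y' \<omega> t"
    using cond_exp_lam_eq_offered_score[of E I p, OF assms(2,1,3)] a by simp
  finally show ?thesis .
qed

context
  fixes I :: "'i::linorder set" and E :: "('i \<times> nat) set"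
    and p :: "'i \<Rightarrow> nat \<Rightarrow> real" and r :: "'i \<Rightarrow> real" and Y :: "'i \<Rightarrow> real"
  assumes finite: "finite I" "finite E"
    and E_subset: "\<And>j s. (j, s) \<in> E \<Longrightarrow> j \<in> I"
    and p: "\<And>j s. (j, s) \<in> E \<Longrightarrow> 0 \<le> p j s \<and> p j s \<le> 1"
    and r: "\<And>j. j \<in> I \<Longrightarrow> 0 \<le> r j"
    and Y: "\<And>j. j \<in> I \<Longrightarrow> Y j \<le> 1"
begin

lemma cond_exp_lam_nonneg: "0 \<le> cond_exp_lam I E p r Y \<omega> t"
proof (cases "offer E p r Y (avail I E p r Y \<omega> t) t")
  case None
  then show ?thesis using cond_exp_lam_eq_offered_score[of E I p, OF finite(2,1) p] by simp
next
  case (Some a)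
  then have "(a, t) \<in> E" "a \<in> I"
    using offer_SomeD(2)[OF Some finite_avail[OF finite(1)]] E_subset by auto
  then have "0 \<le> score p r Y a t"
    using p r Y by (intro score_nonneg) auto
  then show ?thesis
    using Some cond_exp_lam_eq_offered_score[of E I p, OF finite(2,1) p] by simp
qed

lemma abs_cond_exp_lam_le_sum_rewards: "\<bar>cond_exp_lam I E p r Y \<omega> t\<bar> \<le> (\<Sum>j\<in>I. r j)"
proof (cases "offer E p r Y (avail I E p r Y \<omega> t) t")
  case None
  then show ?thesis
    using cond_exp_lam_eq_offered_score[of E I p, OF finite(2,1) p] r by (simp add: sum_nonneg)
next
  case (Some a)
  then have "(a, t) \<in> E" "a \<in> I"
    using offer_SomeD(2)[OF Some finite_avail[OF finite(1)]] E_subset by auto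
  then have "score p r Y a t \<le> r a"
    using p r Y by (intro score_le_reward) auto
  also have "r a \<le> (\<Sum>j\<in>I. r j)"
    using \<open>a \<in> I\<close> finite(1) r by (intro member_le_sum) auto
  finally show ?thesis
    using Some cond_exp_lam_eq_offered_score[of E I p, OF finite(2,1) p] cond_exp_lam_nonneg[of \<omega> t]
    by simp
qed

end

lemma ycrit_score_le_cond_exp_lam:
  assumes finite: "finite I" "finite E"
    and E_subset: "\<And>j s. (j, s) \<in> E \<Longrightarrow> j \<in> I"
    and p: "\<And>j s. (j, s) \<in> E \<Longrightarrow> 0 \<le> p j s \<and> p j s \<le> 1"
    and r: "\<And>j. j \<in> I \<Longrightarrow> 0 \<le> r j"
    and Y: "\<And>j. j \<in> I \<Longrightarrow> j \<noteq> i \<Longrightarrow> Y j \<le> 1"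
    and "y \<le> 1"
  shows "p i t * r i * (1 - g (ycrit I E p r Y \<omega> i t)) \<le> cond_exp_lam I E p r (Y(i := y)) \<omega> t"
proof -
  define It where "It = {j \<in> avail (I - {i}) E p r Y \<omega> t. (j, t) \<in> E}"
  define h where "h x = p i t * r i * (1 - g x)" for x
  have Y': "(Y(i := y)) j \<le> 1" if "j \<in> I" for j
    using Y[OF that] \<open>y \<le> 1\<close> by (cases "j = i") auto
  note nonneg = cond_exp_lam_nonneg[of I E p r "Y(i := y)", OF finite E_subset p r Y']
  show ?thesis
  proof (cases "It = {}")
    case True
    then show ?thesis
      using nonneg by (simp add: ycrit_def It_def[symmetric] g_def)
  next
    case False
    define M where "M = Max ((\<lambda>j. score p r Y j t) ` It)"
    have "finite It"
      using finite_avail[OF finite_Diff[OF finite(1)]] by (simp add: It_def)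
    then have "M \<in> (\<lambda>j. score p r Y j t) ` It"
      using False unfolding M_def by (intro Max_in) auto
    then obtain k where k: "k \<in> It" "M = score p r Y k t" by auto
    have "k \<in> I" "k \<noteq> i" "(k, t) \<in> E"
      using k(1) avail_subset[of "I - {i}" E p r Y \<omega> t] by (auto simp: It_def)
    have "h 1 \<le> M"
      using score_nonneg[of p k t r Y] p[OF \<open>(k, t) \<in> E\<close>] r[OF \<open>k \<in> I\<close>] Y[OF \<open>k \<in> I\<close> \<open>k \<noteq> i\<close>]
      by (simp add: k(2) h_def g_def)
    moreover have "continuous_on {0..1} h"
      unfolding h_def g_def by (intro continuous_intros)
    moreover have "ycrit I E p r Y \<omega> i t =
        (if \<exists>y \<in> {0..1}. h y = M then SOME y. y \<in> {0..1} \<and> h y = M else 0)"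
      using False by (simp add: ycrit_def It_def[symmetric] M_def[symmetric] h_def[symmetric])
    ultimately have "h (ycrit I E p r Y \<omega> i t) \<le> M"
      using critical_value_le[of h M] by simp
    also have "M \<le> cond_exp_lam I E p r (Y(i := y)) \<omega> t"
      using k score_le_cond_exp_lam_removed[where Y' = "Y(i := y)" and Y = Y and i = i, OF finite p]
      by (simp add: It_def)
    finally show ?thesis by (simp add: h_def)
  qed
qed

lemma measurable_score:
  assumes [measurable]: "(\<lambda>x. Y' x j) \<in> borel_measurable M"
  shows "(\<lambda>x. score p r (Y' x) j t) \<in> borel_measurable M"
  unfolding score_def g_def by measurable

lemma measurable_argmax_set:
  fixes f :: "'i \<Rightarrow> 'a \<Rightarrow> real"
  assumes "finite N" and f: "\<And>j. f j \<in> borel_measurable M"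
  shows "(\<lambda>x. {j \<in> N. \<forall>k \<in> N. f k x \<le> f j x}) \<in> M \<rightarrow>\<^sub>M count_space (Pow N)"
proof (subst measurable_count_space_eq2, use assms in simp, intro conjI ballI)
  show "(\<lambda>x. {j \<in> N. \<forall>k \<in> N. f k x \<le> f j x}) \<in> space M \<rightarrow> Pow N" by auto
next
  fix S assume "S \<in> Pow N"
  then have "(\<lambda>x. {j \<in> N. \<forall>k \<in> N. f k x \<le> f j x}) -` {S} \<inter> space M
      = {x \<in> space M. \<forall>j \<in> N. (j \<in> S) = (\<forall>k \<in> N. f k x \<le> f j x)}"
    by auto
  also have "\<dots> \<in> sets M"
    using f \<open>finite N\<close> by measurable
  finally show "(\<lambda>x. {j \<in> N. \<forall>k \<in> N. f k x \<le> f j x}) -` {S} \<inter> space M \<in> sets M" .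
qed

context
  fixes M :: "'a measure" and Y' :: "'a \<Rightarrow> 'i::linorder \<Rightarrow> real"
  assumes measurable_seed: "\<And>j. (\<lambda>x. Y' x j) \<in> borel_measurable M"
begin

lemma measurable_offer:
  assumes "finite A"
  shows "(\<lambda>x. offer E p r (Y' x) A s) \<in> M \<rightarrow>\<^sub>M count_space UNIV"
proof -
  let ?N = "{j \<in> A. (j, s) \<in> E}"
  have "(\<lambda>x. offer E p r (Y' x) A s) =
      (\<lambda>S. if ?N = {} then None else Some (Min S)) \<circ>
      (\<lambda>x. {j \<in> ?N. \<forall>k \<in> ?N. score p r (Y' x) k s \<le> score p r (Y' x) j s})"
    by (simp add: offer_def Let_def fun_eq_iff)
  also have "\<dots> \<in> M \<rightarrow>\<^sub>M count_space UNIV"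
    using assms measurable_seed
    by (intro measurable_comp[OF measurable_argmax_set]) (auto intro: measurable_score)
  finally show ?thesis .
qed

lemma measurable_offer_finite_range:
  assumes "finite A"
  shows "(\<lambda>x. offer E p r (Y' x) A s) \<in> M \<rightarrow>\<^sub>M count_space (insert None (Some ` A))"
proof (rule measurable_count_space_extend[OF subset_UNIV _ measurable_offer[OF assms]])
  show "(\<lambda>x. offer E p r (Y' x) A s) \<in> space M \<rightarrow> insert None (Some ` A)"
  proof
    fix x
    show "offer E p r (Y' x) A s \<in> insert None (Some ` A)"
      using offer_SomeD(1)[OF _ assms] by (cases "offer E p r (Y' x) A s") auto
  qed
qed

lemma measurable_avail:
  assumes "finite R"
  shows "(\<lambda>x. avail R E p r (Y' x) \<omega> s) \<in> M \<rightarrow>\<^sub>M count_space (Pow R)"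
proof (induction s)
  case 0
  then show ?case by simp
next
  case (Suc s)
  define step where "step A z = (case z of None \<Rightarrow> A | Some j \<Rightarrow> if \<omega> (j, s) then A - {j} else A)"
    for A z
  have "(\<lambda>x. step A (offer E p r (Y' x) A s)) \<in> M \<rightarrow>\<^sub>M count_space (Pow R)" if "A \<in> Pow R" for A
    using that \<open>finite R\<close> finite_subset
    by (intro measurable_comp[OF measurable_offer, unfolded o_def])
       (auto simp: step_def split: option.split_asm if_split_asm)
  from measurable_compose_countable'[OF this Suc.IH] show ?case
    using \<open>finite R\<close> by (simp add: step_def Let_def countable_finite)
qed

lemma measurable_offered_score:
  assumes "finite R"
  shows "(\<lambda>x. case offer E p r (Y' x) (avail R E p r (Y' x) \<omega> t) t of
              None \<Rightarrow> 0 | Some a \<Rightarrow> score p r (Y' x) a t) \<in> borel_measurable M"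
proof (rule measurable_compose_countable'[OF _ measurable_avail[OF assms]])
  fix A assume "A \<in> Pow R"
  then have "finite A" using assms finite_subset by blast
  have "(\<lambda>x. case z of None \<Rightarrow> 0 | Some a \<Rightarrow> score p r (Y' x) a t) \<in> borel_measurable M" for z
    using measurable_seed by (cases z) (auto intro: measurable_score)
  from measurable_compose_countable'[OF this measurable_offer_finite_range[OF \<open>finite A\<close>]]
  show "(\<lambda>x. case offer E p r (Y' x) A t of None \<Rightarrow> 0 | Some a \<Rightarrow> score p r (Y' x) a t)
      \<in> borel_measurable M"
    using \<open>finite A\<close> by (simp add: countable_finite)
qed (use assms in \<open>simp add: countable_finite\<close>)

end

lemma measurable_cond_exp_lam_seed:
  assumes "finite I" "finite E" "\<And>j s. (j, s) \<in> E \<Longrightarrow> 0 \<le> p j s \<and> p j s \<le> 1"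
  shows "(\<lambda>y. cond_exp_lam I E p r (Y(i := y)) \<omega> t) \<in> borel_measurable borel"
proof -
  have "(\<lambda>y. cond_exp_lam I E p r (Y(i := y)) \<omega> t) =
      (\<lambda>y. case offer E p r (Y(i := y)) (avail I E p r (Y(i := y)) \<omega> t) t of
             None \<Rightarrow> 0 | Some a \<Rightarrow> score p r (Y(i := y)) a t)"
    by (simp add: fun_eq_iff cond_exp_lam_eq_offered_score[of E I p, OF assms(2,1,3)])
  also have "\<dots> \<in> borel_measurable borel"
    by (rule measurable_offered_score[OF _ assms(1)]) simp
  finally show ?thesis .
qed

lemma integral_uniform_measure_ge_const:
  fixes f :: "real \<Rightarrow> real"
  assumes "a < b" "f \<in> borel_measurable borel"
    and lower: "\<And>y. y \<in> {a..b} \<Longrightarrow> c \<le> f y" and bounded: "\<And>y. y \<in> {a..b} \<Longrightarrow> \<bar>f y\<bar> \<le> B"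
  shows "c \<le> (\<integral>y. f y \<partial>uniform_measure lborel {a..b})"
proof -
  interpret U: prob_space "uniform_measure lborel {a..b}"
    using \<open>a < b\<close> by (intro prob_space_uniform_measure) auto
  have AE: "AE y in uniform_measure lborel {a..b}. y \<in> {a..b}"
    by (rule AE_uniform_measureI) auto
  have "integrable (uniform_measure lborel {a..b}) f"
    using AE assms(2) bounded
    by (intro U.integrable_const_bound[where B = B]) (auto cong: measurable_cong_sets)
  then show ?thesis
    using AE lower by (intro U.integral_ge_const) (auto elim!: AE_mp)
qed

theorem lemma3:
  fixes I :: "'i::linorder set" and E :: "('i \<times> nat) set"
    and p :: "'i \<Rightarrow> nat \<Rightarrow> real" and r :: "'i \<Rightarrow> real"
    and Y :: "'i \<Rightarrow> real" and \<omega> :: "'i \<times> nat \<Rightarrow> bool"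
    and i :: 'i and t :: nat
  assumes "finite I" and "finite E"
    and "\<And>j s. (j, s) \<in> E \<Longrightarrow> j \<in> I \<and> s \<ge> 1"
    and "\<And>j s. (j, s) \<in> E \<Longrightarrow> 0 \<le> p j s \<and> p j s \<le> 1"
    and "\<And>j. j \<in> I \<Longrightarrow> r j > 0"
    and "\<And>j. j \<in> I \<Longrightarrow> j \<noteq> i \<Longrightarrow> 0 \<le> Y j \<and> Y j \<le> 1"
    and "(i, t) \<in> E"
  shows "(\<forall>y \<in> {0..1}.
            cond_exp_lam I E p r (Y(i := y)) \<omega> t \<ge> p i t * r i * (1 - g (ycrit I E p r Y \<omega> i t)))
       \<and> (\<integral>y. cond_exp_lam I E p r (Y(i := y)) \<omega> t \<partial>(uniform_measure lborel {0..1::real}))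
            \<ge> p i t * r i * (1 - g (ycrit I E p r Y \<omega> i t))"
proof -
  have E_subset: "\<And>j s. (j, s) \<in> E \<Longrightarrow> j \<in> I" and r: "\<And>j. j \<in> I \<Longrightarrow> 0 \<le> r j"
    and Y: "\<And>j. j \<in> I \<Longrightarrow> j \<noteq> i \<Longrightarrow> Y j \<le> 1"
    using assms(3,5,6) by (auto simp: less_imp_le)
  have lower: "\<forall>y \<in> {0..1}.
      p i t * r i * (1 - g (ycrit I E p r Y \<omega> i t)) \<le> cond_exp_lam I E p r (Y(i := y)) \<omega> t"
    using ycrit_score_le_cond_exp_lam[where p = p and r = r and Y = Y and \<omega> = \<omega>,
        OF assms(1,2) E_subset assms(4) r Y] by simp
  have bounded: "\<bar>cond_exp_lam I E p r (Y(i := y)) \<omega> t\<bar> \<le> (\<Sum>j\<in>I. r j)" if "y \<in> {0..1}" for y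
  proof -
    have "(Y(i := y)) j \<le> 1" if "j \<in> I" for j
      using Y[OF that] \<open>y \<in> {0..1}\<close> by (cases "j = i") auto
    then show ?thesis
      using assms(1,2,4) E_subset r by (intro abs_cond_exp_lam_le_sum_rewards) auto
  qed
  have "p i t * r i * (1 - g (ycrit I E p r Y \<omega> i t)) \<le>
      (\<integral>y. cond_exp_lam I E p r (Y(i := y)) \<omega> t \<partial>uniform_measure lborel {0..1})"
    using measurable_cond_exp_lam_seed[of I E p r Y i \<omega> t, OF assms(1,2,4)] lower bounded
    by (intro integral_uniform_measure_ge_const) auto
  with lower show ?thesis by simp
qed

end
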